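(* Let $f:\mathbb{R}^n\to\mathbb{R}$ be differentiable with $L$-Lipschitz gradient (in $\ell_2$), $\epsilon>0$, $\delta\in(0,1)$. For each $i\in[n]$ let $\tilde\mu_i$ be the average of $\tilde T_i$ i.i.d. samples from a distribution supported in $[0,1]$ with mean $\mu_i$ and standard deviation $\sigma_i$ (independent across $i$), where the $\tilde T_i$ are fixed integers with $\tilde T_i\ge2nL\log(8n/\delta)/\epsilon$. Let $g_i=|\partial_if(\mu)|$. If $$\sum_{i=1}^n\frac{g_i^2\sigma_i^2}{\tilde T_i}+\frac\epsilon3\max_i\frac{g_i}{\tilde T_i}\le\frac{\epsilon^2}{8\log(8/\delta)},$$ then with probability at least $1-\delta/2$, $|f(\tilde\mu)-f(\mu)|\le\epsilon$. *)

theory Defs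
  imports "HOL-Probability.Probability"
begin

end

theory Submission
  imports Defs
begin

text \<open>
  Write \<open>\<mu>'\<close> for the vector of sample means. Since \<open>\<nabla>f\<close> is \<open>L\<close>-Lipschitz,
  \<open>|f(\<mu>') - f(\<mu>)| \<le> |\<nabla>f(\<mu>) \<bullet> (\<mu>' - \<mu>)| + L\<parallel>\<mu>' - \<mu>\<parallel>\<^sup>2\<close>. The linear term is a sum of
  independent, centred, bounded summands; a Chernoff bound with \<open>\<lambda> = 2 ln(8/\<delta>)/\<epsilon>\<close>, using
  \<open>e\<^sup>x \<le> 1 + x + x\<^sup>2\<close> for \<open>x \<le> 1\<close>, shows that it exceeds \<open>3\<epsilon>/4\<close> with probability at most \<open>\<delta>/4\<close>;
  this is where the variance condition enters. Hoeffding's inequality and a union bound over the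
  \<open>n\<close> coordinates give \<open>(\<mu>'\<^sub>i - \<mu>\<^sub>i)\<^sup>2 \<le> ln(8n/\<delta>)/(2T\<^sub>i)\<close> for all \<open>i\<close> outside an event of
  probability \<open>\<delta>/4\<close>, and the lower bound on the \<open>T\<^sub>i\<close> turns this into \<open>L\<parallel>\<mu>' - \<mu>\<parallel>\<^sup>2 \<le> \<epsilon>/4\<close>.
\<close>

lemma exp_le_one_plus_self_plus_square:
  fixes x :: real
  assumes "x \<le> 1"
  shows "exp x \<le> 1 + x + x\<^sup>2"
proof (cases "x \<ge> 0")
  case True
  then show ?thesis using exp_bound assms by blast
next
  case False
  have "1 - x \<le> exp (- x)" using exp_ge_add_one_self[of "- x"] by simp
  then have "exp x * (1 - x) \<le> 1" by (simp add: exp_minus field_simps)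
  also have "1 \<le> 1 - x ^ 3" using False by simp
  also have "1 - x ^ 3 = (1 + x + x\<^sup>2) * (1 - x)"
    by (simp add: algebra_simps power2_eq_square power3_eq_cube)
  finally show ?thesis by (rule mult_right_le_imp_le) (use False in simp)
qed

lemma lipschitz_constant_nonneg:
  fixes h :: "'a::{real_normed_vector, perfect_space} \<Rightarrow> 'b::real_normed_vector"
  assumes "\<And>x y. norm (h x - h y) \<le> L * norm (x - y)"
  shows "L \<ge> 0"
proof -
  obtain z :: 'a where "z \<noteq> 0" using UNIV_not_singleton[of 0] by blast
  then have "0 < norm (z - 0)" by simp
  moreover have "0 \<le> L * norm (z - 0)" using assms[of z 0] norm_ge_zero order_trans by blast
  ultimately show ?thesis by (simp add: zero_le_mult_iff)
qed

lemma lipschitz_gradient_taylor_bound: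
  fixes f :: "'a::real_inner \<Rightarrow> real"
  assumes grad: "\<And>x. (f has_derivative (\<lambda>h. gradf x \<bullet> h)) (at x)"
    and lip: "\<And>x y. norm (gradf x - gradf y) \<le> L * norm (x - y)"
    and L: "L \<ge> 0"
  shows "\<bar>f y - f x - gradf x \<bullet> (y - x)\<bar> \<le> L * (norm (y - x))\<^sup>2"
proof -
  define \<phi> where "\<phi> t = f (x + t *\<^sub>R (y - x)) - t * (gradf x \<bullet> (y - x))" for t :: real
  have "((\<lambda>t. f (x + t *\<^sub>R (y - x))) has_derivative
          (\<lambda>h. gradf (x + t *\<^sub>R (y - x)) \<bullet> (h *\<^sub>R (y - x)))) (at t within {0..1})" for t
    by (rule has_derivative_compose[OF _ grad]) (auto intro!: derivative_eq_intros)
  then have "(\<phi> has_derivative (\<lambda>h. h * ((gradf (x + t *\<^sub>R (y - x)) - gradf x) \<bullet> (y - x))))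
          (at t within {0..1})" for t
    unfolding \<phi>_def
    by (auto intro!: derivative_eq_intros simp: algebra_simps)
  from mvt_very_simple[of 0 1 \<phi>, OF _ this] obtain t where t: "t \<in> {0..1}"
    and mvt: "\<phi> 1 - \<phi> 0 = (gradf (x + t *\<^sub>R (y - x)) - gradf x) \<bullet> (y - x)"
    by auto
  have "\<bar>f y - f x - gradf x \<bullet> (y - x)\<bar> = \<bar>(gradf (x + t *\<^sub>R (y - x)) - gradf x) \<bullet> (y - x)\<bar>"
    using mvt by (simp add: \<phi>_def)
  also have "\<dots> \<le> norm (gradf (x + t *\<^sub>R (y - x)) - gradf x) * norm (y - x)"
    by (rule Cauchy_Schwarz_ineq2)
  also have "\<dots> \<le> L * norm (t *\<^sub>R (y - x)) * norm (y - x)"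
    by (intro mult_right_mono) (use lip[of "x + t *\<^sub>R (y - x)" x] in auto)
  also have "\<dots> \<le> L * norm (y - x) * norm (y - x)"
    using t L by (intro mult_right_mono mult_left_mono) (auto simp: mult_left_le_one_le)
  finally show ?thesis by (simp add: power2_eq_square)
qed

lemma smooth_function_deviation_le:
  fixes f :: "real ^ 'n \<Rightarrow> real"
  assumes grad: "\<And>x. (f has_derivative (\<lambda>h. gradf x \<bullet> h)) (at x)"
    and lip: "\<And>x y. norm (gradf x - gradf y) \<le> L * norm (x - y)"
    and linear: "\<bar>gradf x \<bullet> (y - x)\<bar> \<le> 3 * \<epsilon> / 4"
    and coordinates: "\<And>i. L * ((y - x) $ i)\<^sup>2 \<le> \<epsilon> / (4 * real CARD('n))"
  shows "\<bar>f y - f x\<bar> \<le> \<epsilon>"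
proof -
  have "L * (norm (y - x))\<^sup>2 = (\<Sum>i\<in>UNIV. L * ((y - x) $ i)\<^sup>2)"
    unfolding power2_norm_eq_inner inner_vec_def sum_distrib_left by (simp add: power2_eq_square)
  also have "\<dots> \<le> (\<Sum>i\<in>(UNIV::'n set). \<epsilon> / (4 * real CARD('n)))"
    by (rule sum_mono) (rule coordinates)
  also have "\<dots> = \<epsilon> / 4" by simp
  finally show ?thesis
    using lipschitz_gradient_taylor_bound[OF grad lip lipschitz_constant_nonneg[OF lip], of y x] linear
    by linarith
qed

lemma Bernstein_parameter_choice:
  fixes V B \<epsilon> K :: real
  assumes \<epsilon>: "\<epsilon> > 0" and K: "K > 0" and "V \<ge> 0" "B \<ge> 0"
    and budget: "V + \<epsilon> / 3 * B \<le> \<epsilon>\<^sup>2 / (8 * K)"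
  shows "2 * K / \<epsilon> * B \<le> 1"
    and "- (2 * K / \<epsilon>) * (3 * \<epsilon> / 4) + (2 * K / \<epsilon>)\<^sup>2 * V \<le> - K"
proof -
  have "2 * K / \<epsilon> * B = 6 * K / \<epsilon>\<^sup>2 * (\<epsilon> / 3 * B)"
    using \<epsilon> by (simp add: field_simps power2_eq_square)
  also have "\<dots> \<le> 6 * K / \<epsilon>\<^sup>2 * (\<epsilon>\<^sup>2 / (8 * K))"
    using budget \<open>V \<ge> 0\<close> K by (intro mult_left_mono) auto
  also have "\<dots> = 3 / 4" using \<epsilon> K by (simp add: field_simps power2_eq_square)
  finally show "2 * K / \<epsilon> * B \<le> 1" by simp
  have "0 \<le> \<epsilon> / 3 * B" using \<epsilon> \<open>B \<ge> 0\<close> by simp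
  then have "V \<le> \<epsilon>\<^sup>2 / (8 * K)" using budget by linarith
  then have "(2 * K / \<epsilon>)\<^sup>2 * V \<le> (2 * K / \<epsilon>)\<^sup>2 * (\<epsilon>\<^sup>2 / (8 * K))"
    by (intro mult_left_mono) auto
  also have "\<dots> = K / 2" using \<epsilon> K by (simp add: field_simps power2_eq_square)
  finally show "- (2 * K / \<epsilon>) * (3 * \<epsilon> / 4) + (2 * K / \<epsilon>)\<^sup>2 * V \<le> - K"
    using \<epsilon> by (simp add: field_simps)
qed

lemma Hoeffding_radius_quadratic_le:
  fixes L \<epsilon> \<delta> n d :: real
  assumes "L \<ge> 0" "\<epsilon> > 0" "0 < \<delta>" "\<delta> \<le> 8 * n" "T > 0"
    and sample_size: "real T \<ge> 2 * n * L * ln (8 * n / \<delta>) / \<epsilon>"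
    and radius: "\<bar>d\<bar> \<le> sqrt (ln (8 * n / \<delta>) / (2 * real T))"
  shows "L * d\<^sup>2 \<le> \<epsilon> / (4 * n)"
proof -
  have "0 \<le> ln (8 * n / \<delta>)" using assms by (intro ln_ge_zero) simp
  then have "d\<^sup>2 \<le> ln (8 * n / \<delta>) / (2 * real T)"
    using radius by (simp add: power2_le_iff_abs_le[symmetric] real_sqrt_ge_0_iff)
  then have "L * d\<^sup>2 \<le> L * (ln (8 * n / \<delta>) / (2 * real T))"
    using \<open>L \<ge> 0\<close> by (rule mult_left_mono)
  also have "\<dots> \<le> \<epsilon> / (4 * n)"
    using sample_size assms by (simp add: field_simps)
  finally show ?thesis .
qed

lemma borel_measurable_vec_lambda:
  fixes h :: "'n::finite \<Rightarrow> 'a \<Rightarrow> real"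
  assumes "\<And>i. h i \<in> borel_measurable M"
  shows "(\<lambda>\<omega>. \<chi> i. h i \<omega>) \<in> borel_measurable M"
proof (rule borel_measurable_euclidean_space[THEN iffD2], intro ballI)
  fix b :: "real ^ 'n" assume "b \<in> Basis"
  then obtain j where b: "b = axis j 1" by (auto simp: Basis_vec_def)
  show "(\<lambda>\<omega>. (\<chi> i. h i \<omega>) \<bullet> b) \<in> borel_measurable M"
    using assms[of j] by (simp add: b inner_axis)
qed
lemma (in prob_space) nn_integral_exp_le_exp_second_moment:
  fixes Y :: "'a \<Rightarrow> real"
  assumes [measurable]: "Y \<in> borel_measurable M"
    and bounded: "AE x in M. \<bar>Y x\<bar> \<le> b"
    and centered: "expectation Y = 0"
    and l: "l \<ge> 0" "l * b \<le> 1"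
  shows "(\<integral>\<^sup>+x. exp (l * Y x) \<partial>M) \<le> exp (l\<^sup>2 * expectation (\<lambda>x. (Y x)\<^sup>2))"
proof -
  have "integrable M Y"
    by (rule integrable_const_bound[where B=b]) (use bounded in auto)
  moreover have "integrable M (\<lambda>x. (Y x)\<^sup>2)"
    by (rule integrable_const_bound[where B="b\<^sup>2"])
       (auto intro!: eventually_mono[OF bounded] simp: power2_le_iff_abs_le)
  ultimately have integrable: "integrable M (\<lambda>x. 1 + l * Y x + (l * Y x)\<^sup>2)"
    by (auto simp: power_mult_distrib)
  have "(\<integral>\<^sup>+x. exp (l * Y x) \<partial>M) \<le> (\<integral>\<^sup>+x. ennreal (1 + l * Y x + (l * Y x)\<^sup>2) \<partial>M)"
  proof (intro nn_integral_mono_AE eventually_mono[OF bounded] ennreal_leI exp_le_one_plus_self_plus_square)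
    fix x assume "\<bar>Y x\<bar> \<le> b"
    then have "l * Y x \<le> l * b" using l by (intro mult_left_mono) auto
    then show "l * Y x \<le> 1" using l by linarith
  qed
  also have "\<dots> = ennreal (\<integral>x. 1 + l * Y x + (l * Y x)\<^sup>2 \<partial>M)"
  proof (intro nn_integral_eq_integral integrable AE_I2)
    show "0 \<le> 1 + t + t\<^sup>2" for t :: real
      using zero_le_power2[of "t + 1/2"] by (simp add: power2_eq_square algebra_simps)
  qed
  also have "(\<integral>x. 1 + l * Y x + (l * Y x)\<^sup>2 \<partial>M) = 1 + l\<^sup>2 * expectation (\<lambda>x. (Y x)\<^sup>2)"
    using \<open>integrable M Y\<close> \<open>integrable M (\<lambda>x. (Y x)\<^sup>2)\<close> centered
    by (simp add: power_mult_distrib prob_space)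
  also have "\<dots> \<le> exp (l\<^sup>2 * expectation (\<lambda>x. (Y x)\<^sup>2))"
    by (rule exp_ge_add_one_self)
  finally show ?thesis by (simp add: ennreal_leI)
qed

lemma (in prob_space) prob_sum_ge_le_exp_second_moment:
  fixes Y :: "'i \<Rightarrow> 'a \<Rightarrow> real"
  assumes fin: "finite I" and indep: "indep_vars (\<lambda>_. borel) Y I"
    and bounded: "\<And>i. i \<in> I \<Longrightarrow> AE x in M. \<bar>Y i x\<bar> \<le> b"
    and centered: "\<And>i. i \<in> I \<Longrightarrow> expectation (Y i) = 0"
    and l: "l > 0" "l * b \<le> 1"
  shows "prob {x\<in>space M. (\<Sum>i\<in>I. Y i x) \<ge> t}
           \<le> exp (- l * t + l\<^sup>2 * (\<Sum>i\<in>I. expectation (\<lambda>x. (Y i x)\<^sup>2)))"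
proof -
  have rv[measurable]: "\<And>i. i \<in> I \<Longrightarrow> random_variable borel (Y i)"
    using indep unfolding indep_vars_def by auto
  have "ennreal (prob {x\<in>space M. (\<Sum>i\<in>I. Y i x) \<ge> t}) = emeasure M {x\<in>space M. (\<Sum>i\<in>I. Y i x) \<ge> t}"
    by (simp add: emeasure_eq_measure)
  also have "\<dots> \<le> ennreal (exp (- l * t)) * (\<integral>\<^sup>+x\<in>space M. exp (l * (\<Sum>i\<in>I. Y i x)) \<partial>M)"
    by (intro Chernoff_ineq_nn_integral_ge l) auto
  also have "(\<integral>\<^sup>+x\<in>space M. exp (l * (\<Sum>i\<in>I. Y i x)) \<partial>M) =
             (\<integral>\<^sup>+x. (\<Prod>i\<in>I. ennreal (exp (l * Y i x))) \<partial>M)"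
    by (intro nn_integral_cong) (simp_all add: sum_distrib_left exp_sum fin prod_ennreal)
  also have "\<dots> = (\<Prod>i\<in>I. \<integral>\<^sup>+x. ennreal (exp (l * Y i x)) \<partial>M)"
    by (intro indep_vars_nn_integral fin indep_vars_compose2[OF indep]) auto
  also have "ennreal (exp (- l * t)) * \<dots> \<le>
               ennreal (exp (- l * t)) * (\<Prod>i\<in>I. ennreal (exp (l\<^sup>2 * expectation (\<lambda>x. (Y i x)\<^sup>2))))"
    using l bounded centered
    by (intro mult_left_mono prod_mono_ennreal nn_integral_exp_le_exp_second_moment rv) auto
  also have "\<dots> = ennreal (exp (- l * t) * (\<Prod>i\<in>I. exp (l\<^sup>2 * expectation (\<lambda>x. (Y i x)\<^sup>2))))"
    by (simp add: prod_ennreal prod_nonneg flip: ennreal_mult)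
  also have "exp (- l * t) * (\<Prod>i\<in>I. exp (l\<^sup>2 * expectation (\<lambda>x. (Y i x)\<^sup>2)))
      = exp (- l * t + l\<^sup>2 * (\<Sum>i\<in>I. expectation (\<lambda>x. (Y i x)\<^sup>2)))"
    by (simp only: exp_add sum_distrib_left exp_sum[OF fin])
  finally show ?thesis by simp
qed

lemma sum_lessThan_Sigma:
  fixes T :: "'n::finite \<Rightarrow> nat"
  shows "(\<Sum>p\<in>{p. snd p < T (fst p)}. h p) = (\<Sum>i\<in>(UNIV::'n set). \<Sum>j<T i. h (i, j))"
proof -
  have Sigma: "{p. snd p < T (fst p)} = Sigma (UNIV::'n set) (\<lambda>i. {..<T i})" by auto
  show ?thesis unfolding Sigma by (subst sum.Sigma) auto
qed

locale sample_means = prob_space M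
  for M :: "'a measure" +
  fixes X :: "'n::finite \<Rightarrow> nat \<Rightarrow> 'a \<Rightarrow> real"
    and D :: "'n \<Rightarrow> real measure"
    and T :: "'n \<Rightarrow> nat"
    and \<mu> \<sigma> :: "real ^ 'n"
  assumes indep: "indep_vars (\<lambda>_. borel) (\<lambda>p. X (fst p) (snd p)) {p. snd p < T (fst p)}"
    and ident: "\<And>i j. j < T i \<Longrightarrow> distr M borel (X i j) = D i"
    and supp: "\<And>i. AE x in D i. x \<in> {0..1}"
    and mean: "\<And>i. \<mu> $ i = (\<integral>x. x \<partial>D i)"
    and sd: "\<And>i. \<sigma> $ i = sqrt (\<integral>x. (x - \<mu> $ i)\<^sup>2 \<partial>D i)"
    and sample_size_pos: "\<And>i. T i > 0"
begin

definition sample_mean :: "'a \<Rightarrow> real ^ 'n" where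
  "sample_mean \<omega> = (\<chi> i. (\<Sum>j<T i. X i j \<omega>) / real (T i))"

lemma random_variable_X [measurable]: "j < T i \<Longrightarrow> random_variable borel (X i j)"
  using indep unfolding indep_vars_def by force

lemma AE_X_in_unit_interval:
  assumes "j < T i" shows "AE \<omega> in M. X i j \<omega> \<in> {0..1}"
  using supp[of i] unfolding ident[OF assms, symmetric] by (subst (asm) AE_distr_iff) (use assms in auto)

lemma integrable_X: "j < T i \<Longrightarrow> integrable M (X i j)"
  by (rule integrable_const_bound[where B=1])
     (auto elim!: eventually_mono[OF AE_X_in_unit_interval])

lemma expectation_X: "j < T i \<Longrightarrow> expectation (X i j) = \<mu> $ i"
  by (simp add: mean ident[symmetric] integral_distr)

lemma expectation_X_centered_square:
  "j < T i \<Longrightarrow> expectation (\<lambda>\<omega>. (X i j \<omega> - \<mu> $ i)\<^sup>2) = (\<sigma> $ i)\<^sup>2"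
  by (simp add: sd ident[symmetric] integral_distr)

lemma mean_in_unit_interval: "\<mu> $ i \<in> {0..1}"
proof -
  have T: "0 < T i" by (rule sample_size_pos)
  have "0 \<le> expectation (X i 0)"
    by (rule integral_nonneg_AE) (use AE_X_in_unit_interval[OF T] in \<open>auto elim!: eventually_mono\<close>)
  moreover have "expectation (X i 0) \<le> expectation (\<lambda>_. 1::real)"
    by (rule integral_mono_AE)
       (use integrable_X[OF T] AE_X_in_unit_interval[OF T] in \<open>auto elim!: eventually_mono\<close>)
  ultimately show ?thesis using expectation_X[OF T] by (simp add: prob_space)
qed

lemma borel_measurable_sample_mean [measurable]: "sample_mean \<in> borel_measurable M"
  unfolding sample_mean_def by (intro borel_measurable_vec_lambda) auto

lemma inner_sample_mean_deviation_eq_sum: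
  "g \<bullet> (sample_mean \<omega> - \<mu>) =
     (\<Sum>p\<in>{p. snd p < T (fst p)}. g $ fst p / real (T (fst p)) * (X (fst p) (snd p) \<omega> - \<mu> $ fst p))"
proof -
  have "g \<bullet> (sample_mean \<omega> - \<mu>) = (\<Sum>i\<in>UNIV. g $ i * ((\<Sum>j<T i. X i j \<omega>) / real (T i) - \<mu> $ i))"
    by (simp add: inner_vec_def sample_mean_def)
  also have "\<dots> = (\<Sum>i\<in>UNIV. g $ i / real (T i) * ((\<Sum>j<T i. X i j \<omega>) - real (T i) * \<mu> $ i))"
    using sample_size_pos by (intro sum.cong) (auto simp: field_simps)
  also have "\<dots> = (\<Sum>i\<in>UNIV. \<Sum>j<T i. g $ i / real (T i) * (X i j \<omega> - \<mu> $ i))"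
  proof (intro sum.cong refl)
    fix i
    have "(\<Sum>j<T i. X i j \<omega> - \<mu> $ i) = (\<Sum>j<T i. X i j \<omega>) - real (T i) * \<mu> $ i"
      by (simp add: sum_subtractf)
    then show "g $ i / real (T i) * ((\<Sum>j<T i. X i j \<omega>) - real (T i) * \<mu> $ i)
        = (\<Sum>j<T i. g $ i / real (T i) * (X i j \<omega> - \<mu> $ i))"
      by (simp only: sum_distrib_left[symmetric])
  qed
  finally show ?thesis by (simp add: sum_lessThan_Sigma)
qed

lemma sum_expectation_weighted_square:
  "(\<Sum>p\<in>{p. snd p < T (fst p)}.
      expectation (\<lambda>\<omega>. (g $ fst p / real (T (fst p)) * (X (fst p) (snd p) \<omega> - \<mu> $ fst p))\<^sup>2))
     = (\<Sum>i\<in>UNIV. (g $ i)\<^sup>2 * (\<sigma> $ i)\<^sup>2 / real (T i))"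
  unfolding sum_lessThan_Sigma
proof (intro sum.cong refl)
  fix i
  have "(\<Sum>j<T i. expectation (\<lambda>\<omega>. (g $ i / real (T i) * (X i j \<omega> - \<mu> $ i))\<^sup>2))
        = (\<Sum>j<T i. (g $ i / real (T i))\<^sup>2 * (\<sigma> $ i)\<^sup>2)"
    by (intro sum.cong refl)
       (simp only: lessThan_iff power_mult_distrib integral_mult_right_zero expectation_X_centered_square)
  also have "\<dots> = (g $ i)\<^sup>2 * (\<sigma> $ i)\<^sup>2 / real (T i)"
    using sample_size_pos[of i] by (simp add: power_divide power2_eq_square)
  finally show "(\<Sum>j<T i. expectation (\<lambda>\<omega>. (g $ fst (i, j) / real (T (fst (i, j)))
                   * (X (fst (i, j)) (snd (i, j)) \<omega> - \<mu> $ fst (i, j)))\<^sup>2))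
                = (g $ i)\<^sup>2 * (\<sigma> $ i)\<^sup>2 / real (T i)" by simp
qed

lemma prob_inner_deviation_ge:
  assumes l: "l > 0" "l * (MAX i. \<bar>g $ i\<bar> / real (T i)) \<le> 1"
  shows "prob {\<omega>\<in>space M. g \<bullet> (sample_mean \<omega> - \<mu>) \<ge> t}
           \<le> exp (- l * t + l\<^sup>2 * (\<Sum>i\<in>UNIV. (g $ i)\<^sup>2 * (\<sigma> $ i)\<^sup>2 / real (T i)))"
proof -
  define J where "J = {p. snd p < T (fst p)}"
  define c where "c p = g $ fst p / real (T (fst p))" for p :: "'n \<times> nat"
  define Y where "Y p = (\<lambda>\<omega>. c p * (X (fst p) (snd p) \<omega> - \<mu> $ fst p))" for p
  have indep_Y: "indep_vars (\<lambda>_. borel) Y J"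
    unfolding Y_def J_def
    by (rule indep_vars_compose2[OF indep, where Y="\<lambda>p x. c p * (x - \<mu> $ fst p)"]) auto
  have bounded_Y: "AE \<omega> in M. \<bar>Y p \<omega>\<bar> \<le> (MAX i. \<bar>g $ i\<bar> / real (T i))" if "p \<in> J" for p
  proof (rule eventually_mono[OF AE_X_in_unit_interval])
    show "snd p < T (fst p)" using that by (simp add: J_def)
    fix \<omega> assume "X (fst p) (snd p) \<omega> \<in> {0..1}"
    then have "\<bar>X (fst p) (snd p) \<omega> - \<mu> $ fst p\<bar> \<le> 1"
      using mean_in_unit_interval[of "fst p"] by auto
    moreover have "\<bar>c p\<bar> \<le> (MAX i. \<bar>g $ i\<bar> / real (T i))"
      by (auto simp: c_def abs_divide intro: Max_ge)
    ultimately show "\<bar>Y p \<omega>\<bar> \<le> (MAX i. \<bar>g $ i\<bar> / real (T i))"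
      by (simp add: Y_def abs_mult mult_le_one order_trans[OF mult_left_le])
  qed
  have centered_Y: "expectation (Y p) = 0" if "p \<in> J" for p
    using that integrable_X expectation_X by (simp add: J_def Y_def prob_space)
  have variance: "(\<Sum>p\<in>J. expectation (\<lambda>\<omega>. (Y p \<omega>)\<^sup>2))
                   = (\<Sum>i\<in>UNIV. (g $ i)\<^sup>2 * (\<sigma> $ i)\<^sup>2 / real (T i))"
    unfolding J_def Y_def c_def by (rule sum_expectation_weighted_square)
  have "J = Sigma UNIV (\<lambda>i. {..<T i})" by (auto simp: J_def)
  then have "finite J" by auto
  moreover have "{\<omega>\<in>space M. g \<bullet> (sample_mean \<omega> - \<mu>) \<ge> t} = {\<omega>\<in>space M. (\<Sum>p\<in>J. Y p \<omega>) \<ge> t}"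
    by (simp add: inner_sample_mean_deviation_eq_sum J_def Y_def c_def)
  ultimately show ?thesis
    using prob_sum_ge_le_exp_second_moment[OF _ indep_Y bounded_Y centered_Y l] by (simp only: variance)
qed

lemma prob_coordinate_deviation_ge:
  assumes "s \<ge> 0"
  shows "prob {\<omega>\<in>space M. \<bar>sample_mean \<omega> $ i - \<mu> $ i\<bar> \<ge> s} \<le> 2 * exp (- 2 * real (T i) * s\<^sup>2)"
proof -
  define I where "I = Pair i ` {..<T i}"
  have inj: "inj_on (Pair i) {..<T i}" by (auto simp: inj_on_def)
  interpret iid: Hoeffding_ineq_iid M I "\<lambda>p. X (fst p) (snd p)" "X i 0" 0 1 "expectation (X i 0)"
  proof unfold_locales
    show "indep_vars (\<lambda>_. borel) (\<lambda>p. X (fst p) (snd p)) I"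
      by (rule indep_vars_subset[OF indep]) (auto simp: I_def)
    show "AE x in M. X i 0 x \<in> {0..1}" by (rule AE_X_in_unit_interval[OF sample_size_pos])
  qed (auto simp: I_def ident sample_size_pos)
  have "card I = T i" unfolding I_def using card_image[OF inj] by simp
  moreover have "(\<Sum>p\<in>I. X (fst p) (snd p) \<omega>) = (\<Sum>j<T i. X i j \<omega>)" for \<omega>
    unfolding I_def by (simp add: sum.reindex[OF inj])
  moreover have "I \<noteq> {}" using sample_size_pos[of i] by (auto simp: I_def)
  ultimately show ?thesis
    using iid.Hoeffding_ineq_abs_ge'[OF assms] expectation_X[OF sample_size_pos[of i]]
    by (simp add: sample_mean_def)
qed

lemma prob_inner_deviation_abs_ge:
  assumes \<epsilon>: "\<epsilon> > 0" and \<delta>: "0 < \<delta>" "\<delta> < 1"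
    and budget: "(\<Sum>i\<in>UNIV. (g $ i)\<^sup>2 * (\<sigma> $ i)\<^sup>2 / real (T i))
                   + \<epsilon> / 3 * (MAX i. \<bar>g $ i\<bar> / real (T i)) \<le> \<epsilon>\<^sup>2 / (8 * ln (8 / \<delta>))"
  shows "prob {\<omega>\<in>space M. \<bar>g \<bullet> (sample_mean \<omega> - \<mu>)\<bar> \<ge> 3 * \<epsilon> / 4} \<le> \<delta> / 4"
proof -
  define K where "K = ln (8 / \<delta>)"
  have K: "K > 0" and exp_K: "exp (- K) = \<delta> / 8"
    using \<delta> by (auto simp: K_def exp_minus intro!: ln_gt_zero)
  have "0 \<le> (MAX i. \<bar>g $ i\<bar> / real (T i))" by (simp add: Max_ge_iff)
  note choice = Bernstein_parameter_choice[OF \<epsilon> K sum_nonneg this budget[folded K_def]]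
  have tail: "prob {\<omega>\<in>space M. h \<bullet> (sample_mean \<omega> - \<mu>) \<ge> 3 * \<epsilon> / 4} \<le> \<delta> / 8"
    if "h = g \<or> h = - g" for h
  proof -
    have same: "(MAX i. \<bar>h $ i\<bar> / real (T i)) = (MAX i. \<bar>g $ i\<bar> / real (T i))"
      "(\<Sum>i\<in>UNIV. (h $ i)\<^sup>2 * (\<sigma> $ i)\<^sup>2 / real (T i)) = (\<Sum>i\<in>UNIV. (g $ i)\<^sup>2 * (\<sigma> $ i)\<^sup>2 / real (T i))"
      using that by auto
    have "prob {\<omega>\<in>space M. h \<bullet> (sample_mean \<omega> - \<mu>) \<ge> 3 * \<epsilon> / 4}
          \<le> exp (- (2 * K / \<epsilon>) * (3 * \<epsilon> / 4)
                   + (2 * K / \<epsilon>)\<^sup>2 * (\<Sum>i\<in>UNIV. (g $ i)\<^sup>2 * (\<sigma> $ i)\<^sup>2 / real (T i)))"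
      unfolding same(2)[symmetric]
      by (rule prob_inner_deviation_ge) (use choice(1) \<epsilon> K same(1) in simp_all)
    also have "\<dots> \<le> exp (- K)" using choice(2) by simp
    finally show ?thesis by (simp add: exp_K)
  qed
  have "prob {\<omega>\<in>space M. \<bar>g \<bullet> (sample_mean \<omega> - \<mu>)\<bar> \<ge> 3 * \<epsilon> / 4} =
        prob ({\<omega>\<in>space M. g \<bullet> (sample_mean \<omega> - \<mu>) \<ge> 3 * \<epsilon> / 4} \<union>
              {\<omega>\<in>space M. (- g) \<bullet> (sample_mean \<omega> - \<mu>) \<ge> 3 * \<epsilon> / 4})"
    by (intro arg_cong[where f=prob]) auto
  also have "\<dots> \<le> prob {\<omega>\<in>space M. g \<bullet> (sample_mean \<omega> - \<mu>) \<ge> 3 * \<epsilon> / 4}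
                 + prob {\<omega>\<in>space M. (- g) \<bullet> (sample_mean \<omega> - \<mu>) \<ge> 3 * \<epsilon> / 4}"
    by (rule measure_Un_le) auto
  also have "\<dots> \<le> \<delta> / 8 + \<delta> / 8" by (intro add_mono tail) auto
  finally show ?thesis by simp
qed

lemma prob_some_coordinate_deviation_ge:
  assumes \<delta>: "0 < \<delta>" "\<delta> < 1"
  shows "prob {\<omega>\<in>space M. \<exists>i. \<bar>sample_mean \<omega> $ i - \<mu> $ i\<bar>
                              \<ge> sqrt (ln (8 * CARD('n) / \<delta>) / (2 * real (T i)))} \<le> \<delta> / 4"
proof -
  define K where "K = ln (8 * CARD('n) / \<delta>)"
  have "\<delta> < 8 * real CARD('n)" using \<delta> zero_less_card_finite[where 'a='n] by linarith
  then have K: "K > 0" and exp_K: "exp (- K) = \<delta> / (8 * CARD('n))"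
    using \<delta> by (auto simp: K_def exp_minus field_simps intro!: ln_gt_zero)
  have "{\<omega>\<in>space M. \<exists>i. \<bar>sample_mean \<omega> $ i - \<mu> $ i\<bar> \<ge> sqrt (K / (2 * real (T i)))}
        = (\<Union>i. {\<omega>\<in>space M. \<bar>sample_mean \<omega> $ i - \<mu> $ i\<bar> \<ge> sqrt (K / (2 * real (T i)))})"
    by auto
  also have "prob \<dots> \<le> (\<Sum>i\<in>UNIV. prob {\<omega>\<in>space M. \<bar>sample_mean \<omega> $ i - \<mu> $ i\<bar> \<ge> sqrt (K / (2 * real (T i)))})"
    by (rule measure_UNION_le) auto
  also have "\<dots> \<le> (\<Sum>i\<in>(UNIV::'n set). \<delta> / (4 * CARD('n)))"
  proof (rule sum_mono)
    fix i
    have exponent: "- 2 * real (T i) * (sqrt (K / (2 * real (T i))))\<^sup>2 = - K"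
      using K sample_size_pos[of i] by simp
    show "prob {\<omega>\<in>space M. \<bar>sample_mean \<omega> $ i - \<mu> $ i\<bar> \<ge> sqrt (K / (2 * real (T i)))}
               \<le> \<delta> / (4 * CARD('n))"
      using prob_coordinate_deviation_ge[of "sqrt (K / (2 * real (T i)))" i, unfolded exponent] K
      by (simp add: exp_K)
  qed
  also have "\<dots> = \<delta> / 4" by simp
  finally show ?thesis by (simp add: K_def)
qed

theorem prob_smooth_function_deviation_le:
  fixes f :: "real ^ 'n \<Rightarrow> real"
  assumes grad: "\<And>x. (f has_derivative (\<lambda>h. gradf x \<bullet> h)) (at x)"
    and lip: "\<And>x y. norm (gradf x - gradf y) \<le> L * norm (x - y)"
    and \<epsilon>: "\<epsilon> > 0" and \<delta>: "0 < \<delta>" "\<delta> < 1"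
    and sample_size: "\<And>i. real (T i) \<ge> 2 * real CARD('n) * L * ln (8 * real CARD('n) / \<delta>) / \<epsilon>"
    and budget: "(\<Sum>i\<in>UNIV. (gradf \<mu> $ i)\<^sup>2 * (\<sigma> $ i)\<^sup>2 / real (T i))
                   + \<epsilon> / 3 * (MAX i. \<bar>gradf \<mu> $ i\<bar> / real (T i)) \<le> \<epsilon>\<^sup>2 / (8 * ln (8 / \<delta>))"
  shows "prob {\<omega>\<in>space M. \<bar>f (sample_mean \<omega>) - f \<mu>\<bar> \<le> \<epsilon>} \<ge> 1 - \<delta> / 2"
proof -
  define s where "s i = sqrt (ln (8 * CARD('n) / \<delta>) / (2 * real (T i)))" for i
  define linear_fail where
    "linear_fail = {\<omega>\<in>space M. \<bar>gradf \<mu> \<bullet> (sample_mean \<omega> - \<mu>)\<bar> \<ge> 3 * \<epsilon> / 4}"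
  define coordinate_fail where
    "coordinate_fail = {\<omega>\<in>space M. \<exists>i. \<bar>sample_mean \<omega> $ i - \<mu> $ i\<bar> \<ge> s i}"
  have L: "L \<ge> 0" by (rule lipschitz_constant_nonneg[OF lip])
  have "\<delta> \<le> 8 * real CARD('n)" using \<delta> zero_less_card_finite[where 'a='n] by linarith
  then have quadratic: "L * ((sample_mean \<omega> - \<mu>) $ i)\<^sup>2 \<le> \<epsilon> / (4 * real CARD('n))"
    if "\<omega> \<notin> coordinate_fail" "\<omega> \<in> space M" for \<omega> i
    using that L \<epsilon> \<delta> sample_size_pos sample_size
    by (intro Hoeffding_radius_quadratic_le[where T = "T i"]) (auto simp: coordinate_fail_def s_def not_le intro: less_imp_le)
  have "f \<in> borel_measurable borel"
    using grad by (intro borel_measurable_continuous_onI continuous_at_imp_continuous_on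
                         ballI has_derivative_continuous) blast
  then have "{\<omega>\<in>space M. \<bar>f (sample_mean \<omega>) - f \<mu>\<bar> \<le> \<epsilon>} \<in> events" by measurable
  moreover have "linear_fail \<union> coordinate_fail \<in> events"
    unfolding linear_fail_def coordinate_fail_def by measurable
  moreover have "space M - (linear_fail \<union> coordinate_fail)
          \<subseteq> {\<omega>\<in>space M. \<bar>f (sample_mean \<omega>) - f \<mu>\<bar> \<le> \<epsilon>}"
  proof
    fix \<omega> assume \<omega>: "\<omega> \<in> space M - (linear_fail \<union> coordinate_fail)"
    then have "\<bar>gradf \<mu> \<bullet> (sample_mean \<omega> - \<mu>)\<bar> \<le> 3 * \<epsilon> / 4" by (auto simp: linear_fail_def)
    with \<omega> show "\<omega> \<in> {\<omega>\<in>space M. \<bar>f (sample_mean \<omega>) - f \<mu>\<bar> \<le> \<epsilon>}"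
      using smooth_function_deviation_le[OF grad lip _ quadratic] by auto
  qed
  ultimately have "1 - prob (linear_fail \<union> coordinate_fail)
                    \<le> prob {\<omega>\<in>space M. \<bar>f (sample_mean \<omega>) - f \<mu>\<bar> \<le> \<epsilon>}"
    by (simp add: finite_measure_mono flip: prob_compl)
  moreover have "prob (linear_fail \<union> coordinate_fail) \<le> \<delta> / 4 + \<delta> / 4"
    unfolding linear_fail_def coordinate_fail_def s_def
    using prob_inner_deviation_abs_ge[OF \<epsilon> \<delta> budget] prob_some_coordinate_deviation_ge[OF \<delta>]
    by (intro order_trans[OF measure_Un_le add_mono]) auto
  ultimately show ?thesis by simp
qed

end

theorem lemma9:
  fixes f :: "real ^ 'n \<Rightarrow> real"
    and gradf :: "real ^ 'n \<Rightarrow> real ^ 'n"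
    and L \<epsilon> \<delta> :: real
    and M :: "'a measure"
    and X :: "'n \<Rightarrow> nat \<Rightarrow> 'a \<Rightarrow> real"
    and D :: "'n \<Rightarrow> real measure"
    and T :: "'n \<Rightarrow> nat"
    and \<mu> \<sigma> :: "real ^ 'n"
  assumes grad: "\<And>x. (f has_derivative (\<lambda>h. gradf x \<bullet> h)) (at x)"
    and lip: "\<And>x y. norm (gradf x - gradf y) \<le> L * norm (x - y)"
    and eps: "\<epsilon> > 0"
    and delta: "0 < \<delta>" "\<delta> < 1"
    and P: "prob_space M"
    and indep: "prob_space.indep_vars M (\<lambda>_. borel) (\<lambda>p. X (fst p) (snd p))
                  {p. snd p < T (fst p)}"
    and ident: "\<And>i j. j < T i \<Longrightarrow> distr M borel (X i j) = D i"
    and supp: "\<And>i. AE x in D i. x \<in> {0..1}"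
    and mean: "\<And>i. \<mu> $ i = (\<integral>x. x \<partial>D i)"
    and sd: "\<And>i. \<sigma> $ i = sqrt (\<integral>x. (x - \<mu> $ i)\<^sup>2 \<partial>D i)"
    and Tpos: "\<And>i. T i > 0"
    and Tbound: "\<And>i. real (T i) \<ge> 2 * real CARD('n) * L * ln (8 * real CARD('n) / \<delta>) / \<epsilon>"
    and cond: "(\<Sum>i\<in>UNIV. (\<bar>gradf \<mu> $ i\<bar>)\<^sup>2 * (\<sigma> $ i)\<^sup>2 / real (T i))
                 + \<epsilon> / 3 * (MAX i\<in>UNIV. \<bar>gradf \<mu> $ i\<bar> / real (T i))
               \<le> \<epsilon>\<^sup>2 / (8 * ln (8 / \<delta>))"
  shows "prob_space.prob M
           {\<omega> \<in> space M. \<bar>f (\<chi> i. (\<Sum>j<T i. X i j \<omega>) / real (T i)) - f \<mu>\<bar> \<le> \<epsilon>}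
         \<ge> 1 - \<delta> / 2"
proof -
  interpret sample_means M X D T \<mu> \<sigma>
    by (intro sample_means.intro sample_means_axioms.intro P indep ident supp mean sd Tpos)
  show ?thesis
    using prob_smooth_function_deviation_le[OF grad lip eps delta Tbound] cond
    by (simp add: sample_mean_def)
qed

end
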